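(* Let $G=DS(L,P^{core},R)$ be a double spider and let $P$ be a path of length one belonging to $L\cup R$. Suppose at least one of the following holds: (1) $P\in R$, $\deg_G(v_l)\ge\deg_G(v_r)>3$, and the double spider $DS(L,P^{core},R\setminus\{P\})$ (i.e. $G$ with the edge of $P$ and its leaf removed) is strongly antimagic; (2) $P\in L$, $\deg_G(v_l)>\deg_G(v_r)\ge 3$, and the double spider $DS(L\setminus\{P\},P^{core},R)$ has a strongly antimagic labeling $f$ with $\varphi_f(v_l)>\varphi_f(v_r)$. Then $G$ is strongly antimagic.
   Context: For a graph $G=(V,E)$ and a bijection $f:E\to\{1,\dots,|E|\}$, $\varphi_f(u)=\sum_{e\ni u}f(e)$; $f$ is strongly antimagic if the $\varphi_f(u)$ are pairwise distinct over $V$ and $\deg(u)<\deg(v)$ implies $\varphi_f(u)<\varphi_f(v)$; a graph is strongly antimagic if it has such a labeling. A double spider is a tree with exactly two vertices of degree at least $3$, denoted $v_l$ and $v_r$, with the convention $\deg(v_l)\ge\deg(v_r)$. Its edge set is decomposed as $P^{core}\cup L\cup R$, where $P^{core}$ is the unique $v_l$–$v_r$ path, $L$ is the set of maximal paths having $v_l$ as an endpoint and edge-disjoint from $P^{core}$ (each ending at a leaf), and $R$ is the analogous set of paths at $v_r$. The double spider is written $DS(L,P^{core},R)$; the length of a path is its number of edges. *)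

theory Defs
  imports Main
begin

definition simple_graph :: "'a set \<Rightarrow> 'a set set \<Rightarrow> bool" where
  "simple_graph V E \<longleftrightarrow> finite V \<and> (\<forall>e\<in>E. \<exists>u v. e = {u, v} \<and> u \<noteq> v \<and> u \<in> V \<and> v \<in> V)"

definition deg :: "'a set set \<Rightarrow> 'a \<Rightarrow> nat" where
  "deg E v = card {e \<in> E. v \<in> e}"

definition connected_graph :: "'a set \<Rightarrow> 'a set set \<Rightarrow> bool" where
  "connected_graph V E \<longleftrightarrow> V \<noteq> {} \<and>
     (\<forall>u\<in>V. \<forall>v\<in>V. (u, v) \<in> {(a, b). {a, b} \<in> E}\<^sup>*)"

definition has_cycle :: "'a set \<Rightarrow> 'a set set \<Rightarrow> bool" where
  "has_cycle V E \<longleftrightarrow> (\<exists>vs. length vs \<ge> 3 \<and> distinct vs \<and> set vs \<subseteq> V \<and>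
     (\<forall>i < length vs. {vs ! i, vs ! ((i + 1) mod length vs)} \<in> E))"

definition tree :: "'a set \<Rightarrow> 'a set set \<Rightarrow> bool" where
  "tree V E \<longleftrightarrow> simple_graph V E \<and> connected_graph V E \<and> \<not> has_cycle V E"

definition double_spider :: "'a set \<Rightarrow> 'a set set \<Rightarrow> 'a \<Rightarrow> 'a \<Rightarrow> bool" where
  "double_spider V E vl vr \<longleftrightarrow> tree V E \<and> vl \<in> V \<and> vr \<in> V \<and> vl \<noteq> vr \<and>
     {v \<in> V. deg E v \<ge> 3} = {vl, vr} \<and> deg E vr \<le> deg E vl"

definition vsum :: "'a set set \<Rightarrow> ('a set \<Rightarrow> nat) \<Rightarrow> 'a \<Rightarrow> nat" where
  "vsum E f u = (\<Sum>e\<in>{e \<in> E. u \<in> e}. f e)"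

definition strongly_antimagic_labeling :: "'a set \<Rightarrow> 'a set set \<Rightarrow> ('a set \<Rightarrow> nat) \<Rightarrow> bool" where
  "strongly_antimagic_labeling V E f \<longleftrightarrow>
     bij_betw f E {1..card E} \<and>
     inj_on (vsum E f) V \<and>
     (\<forall>u\<in>V. \<forall>v\<in>V. deg E u < deg E v \<longrightarrow> vsum E f u < vsum E f v)"

definition strongly_antimagic :: "'a set \<Rightarrow> 'a set set \<Rightarrow> bool" where
  "strongly_antimagic V E \<longleftrightarrow> (\<exists>f. strongly_antimagic_labeling V E f)"

end

theory Submission
  imports Defs
begin

(*
  Give the pendant edge {c, x} the label 1 and raise every label of a strongly antimagic
  labeling g of G - x by one.  Then every vertex sum grows by exactly its degree in G,
  phi_f(u) = phi_g(u) + deg_G(u), so the new labeling is strongly antimagic as soon as phi_g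
  is weakly increasing in deg_G and injective on each degree class of G.  Since g already
  has these properties with respect to the degrees of G - x, they can only fail for c, whose
  degree went up by one, against a vertex u with deg_G(u) = deg_G(c) - 1.  In both cases
  deg_G(u) >= 3, so u is a branch vertex: in case (1) no such u exists because
  deg(vl) >= deg(vr), and in case (2) u = vr, which the hypothesis phi(vl) > phi(vr) covers.
*)

definition shift_labeling :: "'a set \<Rightarrow> ('a set \<Rightarrow> nat) \<Rightarrow> 'a set \<Rightarrow> nat" where
  "shift_labeling e0 g e = (if e = e0 then 1 else g e + 1)"

lemma deg_eq_deg_Diff_edge:
  assumes "finite E" "e \<in> E"
  shows "deg E u = deg (E - {e}) u + (if u \<in> e then 1 else 0)"
proof -
  have "{d \<in> E. u \<in> d} = {d \<in> E - {e}. u \<in> d} \<union> (if u \<in> e then {e} else {})"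
    using assms(2) by auto
  then show ?thesis
    using assms(1) by (simp add: deg_def)
qed

lemma vsum_eq_0_if_deg_eq_0:
  assumes "finite E" "deg E u = 0"
  shows "vsum E g u = 0"
proof -
  have "{e \<in> E. u \<in> e} = {}"
    using assms by (simp add: deg_def)
  then show ?thesis
    unfolding vsum_def by (simp only: sum.empty)
qed

lemma deg_le_vsum:
  assumes "\<And>e. e \<in> E \<Longrightarrow> 1 \<le> g e"
  shows "deg E u \<le> vsum E g u"
  using sum_bounded_below[of "{e \<in> E. u \<in> e}" 1 g] assms by (simp add: deg_def vsum_def)

lemma vsum_shift_labeling:
  assumes "finite E" "e0 \<in> E"
  shows "vsum E (shift_labeling e0 g) u = vsum (E - {e0}) g u + deg E u"
proof -
  let ?I = "{e \<in> E - {e0}. u \<in> e}"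
  have "{e \<in> E. u \<in> e} = ?I \<union> (if u \<in> e0 then {e0} else {})"
    using assms(2) by auto
  moreover have "(\<Sum>e\<in>?I. shift_labeling e0 g e) = (\<Sum>e\<in>?I. Suc (g e))"
    by (intro sum.cong) (auto simp: shift_labeling_def)
  ultimately have "vsum E (shift_labeling e0 g) u = sum g ?I + card ?I + (if u \<in> e0 then 1 else 0)"
    using assms(1) by (simp add: vsum_def shift_labeling_def sum_Suc)
  then show ?thesis
    using deg_eq_deg_Diff_edge[OF assms] by (simp add: vsum_def deg_def)
qed

lemma bij_betw_shift_labeling:
  assumes "finite E" "e0 \<in> E" and g: "bij_betw g (E - {e0}) {1..card (E - {e0})}"
  shows "bij_betw (shift_labeling e0 g) E {1..card E}"
proof -
  have card_E: "card E = Suc (card (E - {e0}))"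
    using card.remove[OF assms(1,2)] .
  have "bij_betw Suc {1..card (E - {e0})} {2..card E}"
    using card_E by (simp add: bij_betw_def image_Suc_atLeastAtMost)
  then have "bij_betw (Suc \<circ> g) (E - {e0}) {2..card E}"
    by (rule bij_betw_trans[OF g])
  moreover have "e \<in> E - {e0} \<Longrightarrow> (Suc \<circ> g) e = shift_labeling e0 g e" for e
    by (simp add: shift_labeling_def)
  ultimately have "bij_betw (shift_labeling e0 g) (E - {e0}) {2..card E}"
    using bij_betw_cong by blast
  moreover have "shift_labeling e0 g e0 = 1"
    by (simp add: shift_labeling_def)
  ultimately have "bij_betw (shift_labeling e0 g) (E - {e0} \<union> {e0}) ({2..card E} \<union> {1})"
    using notIn_Un_bij_betw[of e0 "E - {e0}" "shift_labeling e0 g" "{2..card E}"] by simp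
  moreover have "E - {e0} \<union> {e0} = E" "{2..card E} \<union> {1} = {1..card E}"
    using assms(2) card_E by auto
  ultimately show ?thesis
    by simp
qed

lemma strongly_antimagic_labeling_shift_labeling:
  fixes V :: "'a set" and E :: "'a set set"
  assumes "finite E" "e0 \<in> E"
    and bij: "bij_betw g (E - {e0}) {1..card (E - {e0})}"
    and mono: "\<And>u v. u \<in> V \<Longrightarrow> v \<in> V \<Longrightarrow> deg E u < deg E v \<Longrightarrow>
                 vsum (E - {e0}) g u \<le> vsum (E - {e0}) g v"
    and inj: "\<And>u v. u \<in> V \<Longrightarrow> v \<in> V \<Longrightarrow> deg E u = deg E v \<Longrightarrow>
                 vsum (E - {e0}) g u = vsum (E - {e0}) g v \<Longrightarrow> u = v"
  shows "strongly_antimagic_labeling V E (shift_labeling e0 g)"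
proof -
  note vsum_f = vsum_shift_labeling[OF assms(1,2), of g]
  have strict: "vsum E (shift_labeling e0 g) u < vsum E (shift_labeling e0 g) v"
    if "u \<in> V" "v \<in> V" "deg E u < deg E v" for u v
    using mono[OF that] that(3) vsum_f[of u] vsum_f[of v] by simp
  have "inj_on (vsum E (shift_labeling e0 g)) V"
  proof (rule inj_onI)
    fix u v
    assume uv: "u \<in> V" "v \<in> V"
      and eq: "vsum E (shift_labeling e0 g) u = vsum E (shift_labeling e0 g) v"
    then have "deg E u = deg E v"
      using strict[of u v] strict[of v u] by (metis less_irrefl linorder_neqE_nat)
    then show "u = v"
      using inj[OF uv] eq vsum_f[of u] vsum_f[of v] by simp
  qed
  then show ?thesis
    using bij_betw_shift_labeling[OF assms(1-3)] strict
    by (simp add: strongly_antimagic_labeling_def)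
qed

lemma strongly_antimagic_add_leaf:
  fixes V :: "'a set" and E :: "'a set set"
  assumes "finite E" and e0: "{c, x} \<in> E"
    and deg_x: "deg E x = 1" and deg_c: "2 \<le> deg E c"
    and g: "strongly_antimagic_labeling (V - {x}) (E - {{c, x}}) g"
    and critical: "\<And>u. u \<in> V - {x, c} \<Longrightarrow> deg E u + 1 = deg E c \<Longrightarrow>
                     vsum (E - {{c, x}}) g u \<le> vsum (E - {{c, x}}) g c"
  shows "strongly_antimagic V E"
proof -
  define E' where "E' = E - {{c, x}}"
  have bij_g: "bij_betw g E' {1..card E'}"
    and inj_g: "inj_on (vsum E' g) (V - {x})"
    and mono_g: "\<And>u v. u \<in> V - {x} \<Longrightarrow> v \<in> V - {x} \<Longrightarrow> deg E' u < deg E' v \<Longrightarrow>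
                   vsum E' g u < vsum E' g v"
    using g by (auto simp: strongly_antimagic_labeling_def E'_def)
  have "finite E'"
    using \<open>finite E\<close> by (simp add: E'_def)
  have deg_E: "deg E u = deg E' u + (if u \<in> {c, x} then 1 else 0)" for u
    using deg_eq_deg_Diff_edge[OF \<open>finite E\<close> e0] by (simp add: E'_def)
  then have deg_E_c: "deg E c = deg E' c + 1"
    and deg_E_other: "\<And>u. u \<noteq> c \<Longrightarrow> u \<noteq> x \<Longrightarrow> deg E u = deg E' u"
    and "deg E' x = 0"
    using deg_x by auto
  then have vsum_x: "vsum E' g x = 0"
    using vsum_eq_0_if_deg_eq_0[OF \<open>finite E'\<close>] by blast
  have vsum_pos: "0 < vsum E' g v" if "v \<noteq> x" "deg E v = 1" for v
  proof -
    have "1 \<le> g e" if "e \<in> E'" for e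
      using bij_g that by (auto simp: bij_betw_def)
    then have "deg E' v \<le> vsum E' g v"
      by (rule deg_le_vsum)
    moreover have "v \<noteq> c"
      using that deg_c by auto
    ultimately show ?thesis
      using deg_E_other[of v] that by simp
  qed
  have mono: "vsum E' g u \<le> vsum E' g v"
    if uv: "u \<in> V" "v \<in> V" and less: "deg E u < deg E v" for u v
  proof -
    consider "u = x" | "v = x" | "u \<noteq> x" "v \<noteq> x" "deg E' u < deg E' v"
      | "u \<noteq> x" "u \<noteq> c" "v = c" "deg E u + 1 = deg E c"
      using less deg_E_c deg_E_other[of u] deg_E_other[of v] by fastforce
    then show ?thesis
    proof cases
      case 1
      then show ?thesis
        by (simp add: vsum_x)
    next
      case 2
      then have "u \<noteq> c" "u \<noteq> x" "deg E u = 0"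
        using less deg_x deg_c by auto
      then show ?thesis
        using deg_E_other[of u] vsum_eq_0_if_deg_eq_0[OF \<open>finite E'\<close>] by simp
    next
      case 3
      then show ?thesis
        using mono_g[of u v] uv by simp
    next
      case 4
      then show ?thesis
        using critical[of u] uv by (simp add: E'_def)
    qed
  qed
  have inj: "u = v"
    if uv: "u \<in> V" "v \<in> V" and "deg E u = deg E v" and eq: "vsum E' g u = vsum E' g v" for u v
  proof (rule ccontr)
    assume "u \<noteq> v"
    then have "u \<noteq> x" "v \<noteq> x"
      using vsum_pos[of u] vsum_pos[of v] vsum_x eq \<open>deg E u = deg E v\<close> deg_x by auto
    with \<open>u \<noteq> v\<close> show False
      using inj_onD[OF inj_g eq] uv by blast
  qed
  have "strongly_antimagic_labeling V E (shift_labeling {c, x} g)"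
    using bij_g mono inj unfolding E'_def
    by (rule strongly_antimagic_labeling_shift_labeling[OF \<open>finite E\<close> e0])
  then show ?thesis
    unfolding strongly_antimagic_def by blast
qed

lemma finite_edges_if_simple_graph:
  assumes "simple_graph V E"
  shows "finite E"
proof -
  have "E \<subseteq> Pow V" "finite V"
    using assms by (auto simp: simple_graph_def)
  then show ?thesis
    by (meson finite_Pow_iff finite_subset)
qed

theorem lemma3:
  fixes V :: "'a set" and E :: "'a set set" and vl vr x :: 'a
  assumes ds: "double_spider V E vl vr"
    and cases:
      "(x \<in> V \<and> {vr, x} \<in> E \<and> deg E x = 1 \<and>
          deg E vl \<ge> deg E vr \<and> deg E vr > 3 \<and>
          strongly_antimagic (V - {x}) (E - {{vr, x}}))
       \<or> (x \<in> V \<and> {vl, x} \<in> E \<and> deg E x = 1 \<and>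
          deg E vl > deg E vr \<and> deg E vr \<ge> 3 \<and>
          (\<exists>f. strongly_antimagic_labeling (V - {x}) (E - {{vl, x}}) f \<and>
               vsum (E - {{vl, x}}) f vl > vsum (E - {{vl, x}}) f vr))"
  shows "strongly_antimagic V E"
proof -
  have "finite E"
    and branch: "\<And>u. u \<in> V \<Longrightarrow> 3 \<le> deg E u \<Longrightarrow> u = vl \<or> u = vr"
    using ds finite_edges_if_simple_graph by (auto simp: double_spider_def tree_def)
  note add_leaf = strongly_antimagic_add_leaf[OF \<open>finite E\<close>]
  from cases show ?thesis
    unfolding strongly_antimagic_def[of "V - {x}"]
  proof (elim disjE conjE exE)
    fix g
    assume "{vr, x} \<in> E" "deg E x = 1" "deg E vr \<le> deg E vl" "3 < deg E vr"
      and "strongly_antimagic_labeling (V - {x}) (E - {{vr, x}}) g"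
    moreover have "deg E u + 1 \<noteq> deg E vr" if "u \<in> V - {x, vr}" for u
      using that branch[of u] \<open>deg E vr \<le> deg E vl\<close> \<open>3 < deg E vr\<close> by force
    ultimately show ?thesis
      using add_leaf[of vr x V g] by auto
  next
    fix g
    assume "{vl, x} \<in> E" "deg E x = 1" "deg E vr < deg E vl" "3 \<le> deg E vr"
      and "strongly_antimagic_labeling (V - {x}) (E - {{vl, x}}) g"
      and "vsum (E - {{vl, x}}) g vr < vsum (E - {{vl, x}}) g vl"
    moreover have "u = vr" if "u \<in> V - {x, vl}" "deg E u + 1 = deg E vl" for u
      using that branch[of u] \<open>deg E vr < deg E vl\<close> \<open>3 \<le> deg E vr\<close> by force
    ultimately show ?thesis
      using add_leaf[of vl x V g] by fastforce
  qed
qed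

end
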